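(* Let $n\ge 1$, $0\le d\le n$, and let $g:\mathcal{X}_n\to[0,1]$ belong to $\mathcal{G}_n^{(d)}$, so that its angle map has the multilinear expansion \[ \Theta_g(b)=\sum_{S\subseteq[n],\,|S|\le d}\widehat{\Theta}_S\,\chi_S(b),\qquad \widehat{\Theta}_S=\sum_{T\subseteq S}(-1)^{|S\setminus T|}\,\Theta_g(\mathbf{1}_T). \] Then the encoding operator factors as \[ G_g=\prod_{S\subseteq[n],\,|S|\le d} C^S R_Y\bigl(\widehat{\Theta}_S\bigr) \] (the factors may be taken in any order). Consequently $G_g$ can be implemented with exactly $\sum_{k=0}^{d}\binom{n}{k}$ controlled-$R_Y$ gates, one for each subset $S\subseteq[n]$ with $|S|\le d$.
   Context: Let $\mathbb{B}=\{0,1\}$, $[n]=\{0,1,\dots,n-1\}$, $N=2^n$. The uniform grid is $\mathcal{X}_n=\{x_i=i/N: i=0,\dots,N-1\}$, and for $b=(b_0,\dots,b_{n-1})\in\mathbb{B}^n$ the grid index is $i(b)=\sum_k b_k2^k$. The angle map of $g:\mathcal{X}_n\to[0,1]$ is $\Theta_g:\mathbb{B}^n\to[0,\pi]$, $\Theta_g(b)=2\arcsin\bigl(\sqrt{g(x_{i(b)})}\bigr)$. For $S\subseteq[n]$, $\chi_S(b)=\prod_{j\in S}b_j$, and $\mathbf{1}_T\in\mathbb{B}^n$ is the indicator vector of $T\subseteq[n]$. Every $f:\mathbb{B}^n\to\mathbb{R}$ has a unique expansion $f=\sum_{S\subseteq[n]}\hat f_S\chi_S$; its multilinear degree is $\max\{|S|:\hat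 f_S\neq 0\}$. The class $\mathcal{G}_n^{(d)}$ is the set of $g:\mathcal{X}_n\to[0,1]$ with $\deg(\Theta_g)\le d$. Let $R_Y(\theta)=\begin{pmatrix}\cos(\theta/2)&-\sin(\theta/2)\\ \sin(\theta/2)&\cos(\theta/2)\end{pmatrix}$. On $\mathbb{C}^{N}\otimes\mathbb{C}^2$ with standard basis $\{\mathbf{u}_b\otimes \mathbf{u}^{(2)}_c\}$ (index register indexed by $b\in\mathbb{B}^n$, one ancilla qubit), the encoding operator $G_g$ is the block-diagonal unitary acting by $G_g(\mathbf{u}_b\otimes v)=\mathbf{u}_b\otimes R_Y(\Theta_g(b))v$ for all $v\in\mathbb{C}^2$; in particular $G_g(\mathbf{u}_{b}\otimes\mathbf{u}^{(2)}_0)=\mathbf{u}_{b}\otimes(\sqrt{1-g(x_{i(b)})}\,\mathbf{u}^{(2)}_0+\sqrt{g(x_{i(b)})}\,\mathbf{u}^{(2)}_1)$. For $S\subseteq[n]$ and $\alpha\in\mathbb{R}$, the controlled gate $C^SR_Y(\alpha)$ acts by $\mathbf{u}_b\otimes v\mapsto \mathbf{u}_b\otimes R_Y(\alpha\,\chi_S(b))v$, i.e. it applies $R_Y(\alpha)$ to the ancilla iff all index qubits in $S$ equal $1$ (for $S=\emptyset$ it is an unconditional rotation). *)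

theory Defs
  imports Complex_Main
begin

text \<open>Bit strings b in B^n are encoded by their support sets T \<subseteq> {..<n}
  (b_k = 1 iff k \<in> T); so the indicator vector 1_T is just T.\<close>

definition grid_index :: "nat set \<Rightarrow> nat" where
  "grid_index T = (\<Sum>k\<in>T. 2 ^ k)"

definition grid_pt :: "nat \<Rightarrow> nat \<Rightarrow> real" where
  "grid_pt n i = real i / 2 ^ n"

definition angle_map :: "nat \<Rightarrow> (real \<Rightarrow> real) \<Rightarrow> nat set \<Rightarrow> real" where
  "angle_map n g T = 2 * arcsin (sqrt (g (grid_pt n (grid_index T))))"

definition chi :: "nat set \<Rightarrow> nat set \<Rightarrow> real" where
  "chi S T = (if S \<subseteq> T then 1 else 0)"

definition mldeg_le :: "nat \<Rightarrow> (nat set \<Rightarrow> real) \<Rightarrow> nat \<Rightarrow> bool" where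
  "mldeg_le n f d \<longleftrightarrow> (\<exists>c :: nat set \<Rightarrow> real.
      (\<forall>T. T \<subseteq> {..<n} \<longrightarrow> f T = (\<Sum>S\<in>Pow {..<n}. c S * chi S T)) \<and>
      (\<forall>S. S \<subseteq> {..<n} \<and> d < card S \<longrightarrow> c S = 0))"

definition in_G_class :: "nat \<Rightarrow> nat \<Rightarrow> (real \<Rightarrow> real) \<Rightarrow> bool" where
  "in_G_class n d g \<longleftrightarrow> (\<forall>i < 2 ^ n. 0 \<le> g (grid_pt n i) \<and> g (grid_pt n i) \<le> 1)
                          \<and> mldeg_le n (angle_map n g) d"

definition theta_hat :: "nat \<Rightarrow> (real \<Rightarrow> real) \<Rightarrow> nat set \<Rightarrow> real" where
  "theta_hat n g S = (\<Sum>T\<in>Pow S. (-1) ^ card (S - T) * angle_map n g T)"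

text \<open>R_Y(theta) as a 2x2 matrix indexed by bool (False = |0>, True = |1>): entry (row, col).\<close>
definition RY :: "real \<Rightarrow> bool \<Rightarrow> bool \<Rightarrow> real" where
  "RY \<theta> r c = (if r = c then cos (\<theta>/2) else if r then sin (\<theta>/2) else - sin (\<theta>/2))"

text \<open>States of C^N \<otimes> C^2: amplitude of basis vector u_b \<otimes> u_c is v b c.
  Block-diagonal operator acting by the 2x2 block M b on the ancilla.\<close>
type_synonym state = "nat set \<Rightarrow> bool \<Rightarrow> complex"

definition block_op :: "(nat set \<Rightarrow> bool \<Rightarrow> bool \<Rightarrow> real) \<Rightarrow> state \<Rightarrow> state" where
  "block_op M v = (\<lambda>b r. \<Sum>c\<in>UNIV. complex_of_real (M b r c) * v b c)"

definition encoding_op :: "nat \<Rightarrow> (real \<Rightarrow> real) \<Rightarrow> state \<Rightarrow> state" where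
  "encoding_op n g = block_op (\<lambda>b. RY (angle_map n g b))"

definition CRY :: "nat set \<Rightarrow> real \<Rightarrow> state \<Rightarrow> state" where
  "CRY S \<alpha> = block_op (\<lambda>b. RY (\<alpha> * chi S b))"

text \<open>Ordered product of the gates C^S R_Y(theta_hat S) for S in the list
  (leftmost factor applied last).\<close>
definition gate_product :: "nat \<Rightarrow> (real \<Rightarrow> real) \<Rightarrow> nat set list \<Rightarrow> state \<Rightarrow> state" where
  "gate_product n g Ss = foldr (\<lambda>S acc. CRY S (theta_hat n g S) \<circ> acc) Ss id"

end

theory Submission
  imports Defs
begin

text \<open>Since \<open>chi U T = 1\<close> exactly when \<open>U \<subseteq> T\<close>, a multilinear expansion
  \<open>f T = (\<Sum>U. c U * chi U T)\<close> says that f is the zeta transform of c on the subset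
  lattice, so Moebius inversion recovers \<open>c S\<close> as the alternating sum \<open>theta_hat\<close>;
  the degree bound removes all coefficients of larger sets. On the operator side every
  gate \<open>C\<^sup>S R\<^sub>Y(\<alpha>)\<close> is block diagonal with an \<open>R\<^sub>Y\<close> block in each index
  state b, and \<open>R\<^sub>Y(\<alpha>) R\<^sub>Y(\<beta>) = R\<^sub>Y(\<alpha> + \<beta>)\<close>, so any ordered product of such gates
  is block diagonal with angle \<open>\<Sum>\<^sub>S \<alpha>\<^sub>S chi S b\<close>, which is the angle map.\<close>

lemma sum_Pow_mult_chi:
  assumes "finite A" and "T \<subseteq> A"
  shows "(\<Sum>U\<in>Pow A. c U * chi U T) = sum c (Pow T)"
proof -
  have "(\<Sum>U\<in>Pow A. c U * chi U T) = (\<Sum>U\<in>Pow A. if U \<subseteq> T then c U else 0)"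
    by (rule sum.cong) (simp_all add: chi_def)
  also have "\<dots> = sum c {U \<in> Pow A. U \<subseteq> T}"
    by (rule sum.inter_filter [symmetric]) (simp add: assms)
  also have "{U \<in> Pow A. U \<subseteq> T} = Pow T"
    using assms(2) by auto
  finally show ?thesis .
qed

lemma multilinear_coeff_inversion:
  fixes f c :: "nat set \<Rightarrow> real"
  assumes "finite A"
    and expansion: "\<And>T. T \<subseteq> A \<Longrightarrow> f T = (\<Sum>U\<in>Pow A. c U * chi U T)"
    and "S \<subseteq> A"
  shows "(\<Sum>T\<in>Pow S. (-1) ^ card (S - T) * f T) = c S"
proof -
  have "finite S"
    using assms finite_subset by blast
  have "c S = (\<Sum>T\<in>Pow S. (-1) ^ (card S - card T) * sum c (Pow T))"
    by (rule inclusion_exclusion_mobius) (simp_all add: \<open>finite S\<close>)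
  also have "\<dots> = (\<Sum>T\<in>Pow S. (-1) ^ card (S - T) * f T)"
  proof (rule sum.cong)
    fix T assume "T \<in> Pow S"
    then have "T \<subseteq> A" "finite T"
      using \<open>S \<subseteq> A\<close> \<open>finite S\<close> finite_subset by auto
    then show "(-1) ^ (card S - card T) * sum c (Pow T) = (-1) ^ card (S - T) * f T"
      using \<open>T \<in> Pow S\<close> by (simp add: expansion sum_Pow_mult_chi[OF \<open>finite A\<close>] card_Diff_subset)
  qed simp
  finally show ?thesis ..
qed

lemma mldeg_le_expansion:
  assumes "mldeg_le n f d" and "T \<subseteq> {..<n}"
  shows "f T = (\<Sum>S\<in>{S. S \<subseteq> {..<n} \<and> card S \<le> d}.
                  (\<Sum>U\<in>Pow S. (-1) ^ card (S - U) * f U) * chi S T)"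
proof -
  obtain c where expansion: "\<forall>T. T \<subseteq> {..<n} \<longrightarrow> f T = (\<Sum>S\<in>Pow {..<n}. c S * chi S T)"
    and high: "\<forall>S. S \<subseteq> {..<n} \<and> d < card S \<longrightarrow> c S = 0"
    using assms(1) unfolding mldeg_le_def by blast
  have "f T = (\<Sum>S\<in>Pow {..<n}. c S * chi S T)"
    using expansion assms(2) by blast
  also have "\<dots> = (\<Sum>S\<in>{S. S \<subseteq> {..<n} \<and> card S \<le> d}. c S * chi S T)"
  proof (rule sum.mono_neutral_right)
    show "{S. S \<subseteq> {..<n} \<and> card S \<le> d} \<subseteq> Pow {..<n}"
      by blast
    show "\<forall>S\<in>Pow {..<n} - {S. S \<subseteq> {..<n} \<and> card S \<le> d}. c S * chi S T = 0"
      using high by (simp add: not_le)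
  qed simp
  also have "\<dots> = (\<Sum>S\<in>{S. S \<subseteq> {..<n} \<and> card S \<le> d}.
                      (\<Sum>U\<in>Pow S. (-1) ^ card (S - U) * f U) * chi S T)"
    using multilinear_coeff_inversion[of "{..<n}" f c] expansion by (intro sum.cong) auto
  finally show ?thesis .
qed

lemma card_subsets_card_le:
  assumes "finite A"
  shows "card {S. S \<subseteq> A \<and> card S \<le> d} = (\<Sum>k\<le>d. card A choose k)"
proof -
  have "{S. S \<subseteq> A \<and> card S \<le> d} = (\<Union>k\<le>d. {S. S \<subseteq> A \<and> card S = k})"
    by auto
  also have "card \<dots> = (\<Sum>k\<le>d. card {S. S \<subseteq> A \<and> card S = k})"
    by (rule card_UN_disjoint) (auto intro: finite_subset[of _ "Pow A"] assms)
  finally show ?thesis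
    by (simp add: n_subsets assms)
qed

lemma RY_matrix_mult: "(\<Sum>k\<in>UNIV. RY \<alpha> r k * RY \<beta> k c) = RY (\<alpha> + \<beta>) r c"
  unfolding UNIV_bool RY_def add_divide_distrib cos_add sin_add
  by (cases r; cases c) (simp_all add: algebra_simps)

lemma block_op_comp:
  "block_op M (block_op N v) = block_op (\<lambda>b r c. \<Sum>k\<in>UNIV. M b r k * N b k c) v"
  by (auto simp: block_op_def UNIV_bool algebra_simps intro!: ext)

lemma block_op_RY_comp:
  "block_op (\<lambda>b. RY (\<alpha> b)) (block_op (\<lambda>b. RY (\<beta> b)) v) = block_op (\<lambda>b. RY (\<alpha> b + \<beta> b)) v"
  by (simp add: block_op_comp RY_matrix_mult)

lemma block_op_RY_zero: "block_op (\<lambda>b. RY 0) = id"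
  by (simp add: fun_eq_iff block_op_def RY_def UNIV_bool)

lemma CRY_product_eq_block_op:
  "foldr (\<lambda>S acc. CRY S (\<alpha> S) \<circ> acc) Ss id = block_op (\<lambda>b. RY (\<Sum>S\<leftarrow>Ss. \<alpha> S * chi S b))"
  by (induction Ss) (auto simp: block_op_RY_zero CRY_def block_op_RY_comp intro!: ext)

theorem mainTheorem1:
  fixes n d :: nat and g :: "real \<Rightarrow> real"
  assumes "1 \<le> n" and "d \<le> n" and "in_G_class n d g"
  shows "(\<forall>T. T \<subseteq> {..<n} \<longrightarrow>
            angle_map n g T = (\<Sum>S\<in>{S. S \<subseteq> {..<n} \<and> card S \<le> d}. theta_hat n g S * chi S T))
       \<and> (\<forall>Ss. distinct Ss \<and> set Ss = {S. S \<subseteq> {..<n} \<and> card S \<le> d} \<longrightarrow>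
            (\<forall>v T c. T \<subseteq> {..<n} \<longrightarrow> gate_product n g Ss v T c = encoding_op n g v T c)
            \<and> length Ss = (\<Sum>k\<le>d. n choose k))"
proof (intro conjI allI impI)
  show expansion: "angle_map n g T = (\<Sum>S\<in>{S. S \<subseteq> {..<n} \<and> card S \<le> d}. theta_hat n g S * chi S T)"
    if "T \<subseteq> {..<n}" for T
    using mldeg_le_expansion[OF _ that] assms(3) by (simp add: in_G_class_def theta_hat_def)
  fix Ss :: "nat set list"
  assume Ss: "distinct Ss \<and> set Ss = {S. S \<subseteq> {..<n} \<and> card S \<le> d}"
  show "length Ss = (\<Sum>k\<le>d. n choose k)"
    using Ss distinct_card card_subsets_card_le[of "{..<n}" d] by fastforce
  fix v T c
  assume "T \<subseteq> {..<n}"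
  then have "(\<Sum>S\<leftarrow>Ss. theta_hat n g S * chi S T) = angle_map n g T"
    using Ss expansion by (simp add: sum_list_distinct_conv_sum_set)
  then show "gate_product n g Ss v T c = encoding_op n g v T c"
    by (simp add: gate_product_def CRY_product_eq_block_op encoding_op_def block_op_def)
qed

end
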